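(* Let $A$ be a hyperoperator on $\mathbb{R}^n$ on the complex Banach space $X$ and let $f\in\mathcal{E}(\mathbb{R}^n)$ be real-valued. Assume that $b=f(a)$ is bounded, i.e. extends to a bounded operator $\bar b$ on $X$. Then $f(\sigma(A))\subset\sigma(\bar b)$, where $\sigma(\bar b)$ is the spectrum of the bounded operator $\bar b$.
   Context: $X$ is a complex Banach space, $L(X)$ the bounded operators. $\mathcal{D}(\mathbb{R}^n)=C_c^\infty(\mathbb{R}^n)$, $\mathcal{E}(\mathbb{R}^n)=C^\infty(\mathbb{R}^n)$. A hyperoperator on $\mathbb{R}^n$ is a linear map $A:\mathcal{D}(\mathbb{R}^n)\to L(X)$, continuous ($A(\phi_j)\to0$ in operator norm when $\phi_j\to0$ in $\mathcal{D}(\mathbb{R}^n)$), multiplicative, with (i) $D_A:=\bigcup_\phi\operatorname{Im}A(\phi)$ dense and (ii) $\bigcap_\phi\operatorname{Ker}A(\phi)=\{0\}$. For smooth real-valued $f$ and $x\in D_A$ written $x=A(\phi)y$, $f(a)x:=A(f\phi)y$ (well defined). $\sigma(A)$ is the support of $A$ as an $L(X)$-valued distribution. *)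

theory Defs
  imports "HOL-Analysis.Analysis"
begin

text \<open>Complex Banach spaces: a real Banach space with a compatible complex
scalar multiplication (HOL-Analysis has no complex vector space class).\<close>
class complex_banach = banach +
  fixes cscale :: "complex \<Rightarrow> 'a \<Rightarrow> 'a"
  assumes cscale_of_real: "cscale (complex_of_real r) x = r *\<^sub>R x"
    and cscale_add_right: "cscale a (x + y) = cscale a x + cscale a y"
    and cscale_add_left: "cscale (a + b) x = cscale a x + cscale b x"
    and cscale_cscale: "cscale a (cscale b x) = cscale (a * b) x"
    and norm_cscale: "norm (cscale a x) = cmod a * norm x"

definition bop :: "('x::complex_banach \<Rightarrow> 'x) \<Rightarrow> bool" where
  "bop T \<longleftrightarrow> bounded_linear T \<and> (\<forall>c x. T (cscale c x) = cscale c (T x))"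

fun pderivs :: "(real^'n) list \<Rightarrow> (real^'n \<Rightarrow> 'b::real_normed_vector) \<Rightarrow> real^'n \<Rightarrow> 'b" where
  "pderivs [] f = f"
| "pderivs (v # vs) f = (\<lambda>x. frechet_derivative (pderivs vs f) (at x) v)"

definition smooth :: "(real^'n \<Rightarrow> 'b::real_normed_vector) \<Rightarrow> bool" where
  "smooth f \<longleftrightarrow> (\<forall>vs \<in> lists Basis. \<forall>x. pderivs vs f differentiable (at x))"

definition tsupp :: "(real^'n \<Rightarrow> 'b::zero) \<Rightarrow> (real^'n) set" where
  "tsupp f = closure {x. f x \<noteq> 0}"

definition test :: "(real^'n \<Rightarrow> complex) \<Rightarrow> bool" where
  "test \<phi> \<longleftrightarrow> smooth \<phi> \<and> compact (tsupp \<phi>)"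

definition conv0_D :: "(nat \<Rightarrow> real^'n \<Rightarrow> complex) \<Rightarrow> bool" where
  "conv0_D \<phi>s \<longleftrightarrow> (\<forall>j. test (\<phi>s j)) \<and> (\<exists>K. compact K \<and> (\<forall>j. tsupp (\<phi>s j) \<subseteq> K)) \<and>
     (\<forall>vs \<in> lists Basis. uniform_limit UNIV (\<lambda>j. pderivs vs (\<phi>s j)) (\<lambda>x. 0) sequentially)"

definition hyperop :: "((real^'n \<Rightarrow> complex) \<Rightarrow> 'x::complex_banach \<Rightarrow> 'x) \<Rightarrow> bool" where
  "hyperop A \<longleftrightarrow>
     (\<forall>\<phi>. test \<phi> \<longrightarrow> bop (A \<phi>)) \<and>
     (\<forall>\<phi> \<psi>. test \<phi> \<longrightarrow> test \<psi> \<longrightarrow> A (\<lambda>x. \<phi> x + \<psi> x) = (\<lambda>y. A \<phi> y + A \<psi> y)) \<and>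
     (\<forall>c \<phi>. test \<phi> \<longrightarrow> A (\<lambda>x. c * \<phi> x) = (\<lambda>y. cscale c (A \<phi> y))) \<and>
     (\<forall>\<phi>s. conv0_D \<phi>s \<longrightarrow> (\<lambda>j. onorm (A (\<phi>s j))) \<longlonglongrightarrow> 0) \<and>
     (\<forall>\<phi> \<psi>. test \<phi> \<longrightarrow> test \<psi> \<longrightarrow> A (\<lambda>x. \<phi> x * \<psi> x) = A \<phi> \<circ> A \<psi>) \<and>
     closure (\<Union>\<phi> \<in> Collect test. range (A \<phi>)) = UNIV \<and>
     (\<forall>y. (\<forall>\<phi>. test \<phi> \<longrightarrow> A \<phi> y = 0) \<longrightarrow> y = 0)"

definition DA :: "((real^'n \<Rightarrow> complex) \<Rightarrow> 'x::complex_banach \<Rightarrow> 'x) \<Rightarrow> 'x set" where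
  "DA A = (\<Union>\<phi> \<in> Collect test. range (A \<phi>))"

definition fcalc :: "(real^'n \<Rightarrow> real) \<Rightarrow> ((real^'n \<Rightarrow> complex) \<Rightarrow> 'x::complex_banach \<Rightarrow> 'x) \<Rightarrow> 'x \<Rightarrow> 'x" where
  "fcalc f A x = (SOME z. \<exists>\<phi> y. test \<phi> \<and> x = A \<phi> y \<and> z = A (\<lambda>t. complex_of_real (f t) * \<phi> t) y)"

definition hsupp :: "((real^'n \<Rightarrow> complex) \<Rightarrow> 'x::complex_banach \<Rightarrow> 'x) \<Rightarrow> (real^'n) set" where
  "hsupp A = {t. \<forall>U. open U \<and> t \<in> U \<longrightarrow> (\<exists>\<phi>. test \<phi> \<and> tsupp \<phi> \<subseteq> U \<and> A \<phi> \<noteq> (\<lambda>y. 0))}"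

definition opspectrum :: "('x::complex_banach \<Rightarrow> 'x) \<Rightarrow> complex set" where
  "opspectrum T = {l. \<not> (\<exists>S. bop S \<and> (\<forall>x. S (T x - cscale l x) = x) \<and>
                                  (\<forall>x. T (S x) - cscale l (S x) = x))}"

end

theory Submission
  imports Defs "HOL-Real_Asymp.Real_Asymp"
begin

text \<open>Suppose \<open>\<lambda> = f t\<^sub>0\<close> with \<open>t\<^sub>0\<close> in the support of \<open>A\<close>, and that \<open>bbar - \<lambda>\<close> has a
bounded left inverse \<open>S\<close> with \<open>\<parallel>S\<parallel> \<le> K\<close>. On \<open>D\<^sub>A\<close> the operator \<open>bbar - \<lambda>\<close> acts as
multiplication by \<open>g = f - \<lambda>\<close>, so \<open>A(\<psi>) = S A(g \<psi>)\<close> for every test function \<open>\<psi>\<close>, and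
iterating gives \<open>A(\<phi>) = S\<^sup>k A(g\<^sup>k \<phi>)\<close>. Choose \<open>\<phi>\<close> with \<open>A(\<phi>) \<noteq> 0\<close> supported where
\<open>K |g| \<le> 1/2\<close>. By the Leibniz rule the derivatives of order \<open>m\<close> of \<open>(K g)\<^sup>k \<phi>\<close> are
\<open>O((k+1)\<^sup>m / 2\<^sup>k)\<close>, so these test functions tend to \<open>0\<close> in \<open>\<D>(\<real>\<^sup>n)\<close>, and by
continuity of \<open>A\<close> we get \<open>\<parallel>A(\<phi>)\<parallel> \<le> \<parallel>A((K g)\<^sup>k \<phi>)\<parallel> \<rightarrow> 0\<close>, a contradiction.\<close>

section \<open>Directional derivatives and smooth functions\<close>

definition dir_deriv :: "real^'n \<Rightarrow> (real^'n \<Rightarrow> 'b::real_normed_vector) \<Rightarrow> real^'n \<Rightarrow> 'b" where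
  "dir_deriv v F = (\<lambda>x. frechet_derivative F (at x) v)"

lemma dir_deriv_eq: "(F has_derivative F') (at x) \<Longrightarrow> dir_deriv v F x = F' v"
  unfolding dir_deriv_def by (simp add: frechet_derivative_at[symmetric])

lemma has_derivative_dir_deriv:
  "F differentiable (at x) \<Longrightarrow> (F has_derivative (\<lambda>v. dir_deriv v F x)) (at x)"
  by (simp add: dir_deriv_def frechet_derivative_works[symmetric])

lemma pderivs_Cons_dir_deriv: "pderivs (v # vs) F = dir_deriv v (pderivs vs F)"
  by (simp add: dir_deriv_def)

lemma pderivs_snoc: "pderivs (vs @ [v]) F = pderivs vs (dir_deriv v F)"
  by (induction vs) (simp_all add: dir_deriv_def)

lemma dir_deriv_add:
  assumes "\<And>x. F differentiable (at x)" "\<And>x. G differentiable (at x)"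
  shows "dir_deriv v (\<lambda>x. F x + G x) = (\<lambda>x. dir_deriv v F x + dir_deriv v G x)"
  using assms by (intro ext dir_deriv_eq has_derivative_add) (simp_all add: has_derivative_dir_deriv)

lemma dir_deriv_const: "dir_deriv v (\<lambda>x. c) = (\<lambda>x. 0)"
  by (intro ext dir_deriv_eq has_derivative_const)

lemma dir_deriv_mult:
  fixes F G :: "real^'n \<Rightarrow> 'b::real_normed_algebra"
  assumes "\<And>x. F differentiable (at x)" "\<And>x. G differentiable (at x)"
  shows "dir_deriv v (\<lambda>x. F x * G x) = (\<lambda>x. F x * dir_deriv v G x + dir_deriv v F x * G x)"
  using assms by (intro ext dir_deriv_eq has_derivative_mult) (simp_all add: has_derivative_dir_deriv)

lemma dir_deriv_of_real:
  fixes f :: "real^'n \<Rightarrow> real"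
  assumes "\<And>x. f differentiable (at x)"
  shows "dir_deriv v (\<lambda>x. complex_of_real (f x)) = (\<lambda>x. complex_of_real (dir_deriv v f x))"
  using assms by (intro ext dir_deriv_eq has_derivative_of_real) (simp_all add: has_derivative_dir_deriv)

lemma dir_deriv_power_mult:
  fixes g H :: "real^'n \<Rightarrow> 'b::real_normed_field"
  assumes "\<And>x. g differentiable (at x)" "\<And>x. H differentiable (at x)"
  shows "dir_deriv v (\<lambda>x. g x ^ k * H x) =
    (\<lambda>x. g x ^ k * dir_deriv v H x + of_nat k * (g x ^ (k - 1) * (dir_deriv v g x * H x)))"
proof
  fix x
  have "((\<lambda>x. g x ^ k * H x) has_derivative
      (\<lambda>h. g x ^ k * dir_deriv h H x + of_nat k * dir_deriv h g x * g x ^ (k - 1) * H x)) (at x)"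
    using assms by (intro has_derivative_mult has_derivative_power has_derivative_dir_deriv)
  then show "dir_deriv v (\<lambda>x. g x ^ k * H x) x =
      g x ^ k * dir_deriv v H x + of_nat k * (g x ^ (k - 1) * (dir_deriv v g x * H x))"
    by (simp add: dir_deriv_eq ac_simps)
qed

definition differentiable_upto :: "nat \<Rightarrow> (real^'n \<Rightarrow> 'b::real_normed_vector) \<Rightarrow> bool" where
  "differentiable_upto m F \<longleftrightarrow>
     (\<forall>vs\<in>lists Basis. length vs \<le> m \<longrightarrow> (\<forall>x. pderivs vs F differentiable (at x)))"

lemma smooth_iff_differentiable_upto: "smooth F \<longleftrightarrow> (\<forall>m. differentiable_upto m F)"
  unfolding smooth_def differentiable_upto_def by auto

lemma differentiable_upto_0: "differentiable_upto 0 F \<longleftrightarrow> (\<forall>x. F differentiable (at x))"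
  by (auto simp: differentiable_upto_def)

lemma differentiable_upto_Suc:
  fixes F :: "real^'n \<Rightarrow> 'b::real_normed_vector"
  shows "differentiable_upto (Suc m) F \<longleftrightarrow>
     (\<forall>x. F differentiable (at x)) \<and> (\<forall>v\<in>Basis. differentiable_upto m (dir_deriv v F))"
proof
  assume F: "differentiable_upto (Suc m) F"
  have "differentiable_upto m (dir_deriv v F)" if "v \<in> Basis" for v
    unfolding differentiable_upto_def
  proof (intro ballI impI allI)
    fix vs :: "(real^'n) list" and x assume "vs \<in> lists Basis" "length vs \<le> m"
    with that have "vs @ [v] \<in> lists Basis" "length (vs @ [v]) \<le> Suc m" by auto
    with F show "pderivs vs (dir_deriv v F) differentiable (at x)"
      unfolding differentiable_upto_def by (metis pderivs_snoc)
  qed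
  moreover have "F differentiable (at x)" for x
    using F unfolding differentiable_upto_def by (metis le0 list.size(3) lists.Nil pderivs.simps(1))
  ultimately show "(\<forall>x. F differentiable (at x)) \<and> (\<forall>v\<in>Basis. differentiable_upto m (dir_deriv v F))"
    by blast
next
  assume F: "(\<forall>x. F differentiable (at x)) \<and> (\<forall>v\<in>Basis. differentiable_upto m (dir_deriv v F))"
  show "differentiable_upto (Suc m) F"
    unfolding differentiable_upto_def
  proof (intro ballI impI allI)
    fix vs :: "(real^'n) list" and x assume vs: "vs \<in> lists Basis" "length vs \<le> Suc m"
    show "pderivs vs F differentiable (at x)"
    proof (cases vs rule: rev_exhaust)
      case Nil
      then show ?thesis using F by simp
    next
      case (snoc ws v)
      with vs F show ?thesis unfolding differentiable_upto_def by (auto simp: pderivs_snoc)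
    qed
  qed
qed

lemma differentiable_upto_mono: "differentiable_upto m' F \<Longrightarrow> m \<le> m' \<Longrightarrow> differentiable_upto m F"
  unfolding differentiable_upto_def by auto

lemma differentiable_upto_imp_differentiable: "differentiable_upto m F \<Longrightarrow> F differentiable (at x)"
  using differentiable_upto_mono[of m F 0] differentiable_upto_0 by auto

lemma differentiable_upto_add:
  "differentiable_upto m F \<Longrightarrow> differentiable_upto m G \<Longrightarrow> differentiable_upto m (\<lambda>x. F x + G x)"
proof (induction m arbitrary: F G)
  case 0
  then show ?case by (simp add: differentiable_upto_0)
next
  case (Suc m)
  then have "\<And>x. F differentiable (at x)" "\<And>x. G differentiable (at x)"
    using differentiable_upto_imp_differentiable by blast+
  with Suc show ?case by (simp add: differentiable_upto_Suc dir_deriv_add)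
qed

lemma differentiable_upto_const: "differentiable_upto m (\<lambda>x. c)"
  by (induction m arbitrary: c) (simp_all add: differentiable_upto_0 differentiable_upto_Suc dir_deriv_const)

lemma differentiable_upto_mult:
  fixes F G :: "real^'n \<Rightarrow> 'b::real_normed_algebra"
  shows "differentiable_upto m F \<Longrightarrow> differentiable_upto m G \<Longrightarrow> differentiable_upto m (\<lambda>x. F x * G x)"
proof (induction m arbitrary: F G)
  case 0
  then show ?case by (simp add: differentiable_upto_0)
next
  case (Suc m)
  then have "\<And>x. F differentiable (at x)" "\<And>x. G differentiable (at x)"
    using differentiable_upto_imp_differentiable by blast+
  moreover have "differentiable_upto m F" "differentiable_upto m G"
    using Suc.prems differentiable_upto_mono le_SucI by blast+
  ultimately show ?case
    using Suc by (simp add: differentiable_upto_Suc dir_deriv_mult differentiable_upto_add)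
qed

lemma differentiable_of_real:
  "f differentiable (at x) \<Longrightarrow> (\<lambda>x. complex_of_real (f x)) differentiable (at x)"
  unfolding differentiable_def using has_derivative_of_real by blast

lemma differentiable_upto_of_real:
  fixes f :: "real^'n \<Rightarrow> real"
  shows "differentiable_upto m f \<Longrightarrow> differentiable_upto m (\<lambda>x. complex_of_real (f x))"
proof (induction m arbitrary: f)
  case 0
  then show ?case by (simp add: differentiable_upto_0 differentiable_of_real)
next
  case (Suc m)
  then have "\<And>x. f differentiable (at x)" using differentiable_upto_imp_differentiable by blast
  with Suc show ?case by (simp add: differentiable_upto_Suc dir_deriv_of_real differentiable_of_real)
qed

lemma smooth_add: "smooth F \<Longrightarrow> smooth G \<Longrightarrow> smooth (\<lambda>x. F x + G x)"
  by (simp add: smooth_iff_differentiable_upto differentiable_upto_add)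

lemma smooth_const: "smooth (\<lambda>x. c)"
  by (simp add: smooth_iff_differentiable_upto differentiable_upto_const)

lemma smooth_mult:
  fixes F G :: "real^'n \<Rightarrow> 'b::real_normed_algebra"
  shows "smooth F \<Longrightarrow> smooth G \<Longrightarrow> smooth (\<lambda>x. F x * G x)"
  by (simp add: smooth_iff_differentiable_upto differentiable_upto_mult)

lemma smooth_power:
  fixes F :: "real^'n \<Rightarrow> 'b::real_normed_algebra_1"
  shows "smooth F \<Longrightarrow> smooth (\<lambda>x. F x ^ k)"
  by (induction k) (simp_all add: smooth_const smooth_mult)

lemma smooth_of_real:
  fixes f :: "real^'n \<Rightarrow> real"
  shows "smooth f \<Longrightarrow> smooth (\<lambda>x. complex_of_real (f x))"
  by (simp add: smooth_iff_differentiable_upto differentiable_upto_of_real)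

lemma smooth_differentiable: "smooth F \<Longrightarrow> F differentiable (at x)"
  by (simp add: smooth_iff_differentiable_upto differentiable_upto_imp_differentiable)

lemma smooth_dir_deriv: "smooth F \<Longrightarrow> v \<in> Basis \<Longrightarrow> smooth (dir_deriv v F)"
  by (metis smooth_iff_differentiable_upto differentiable_upto_Suc)

lemma smooth_continuous_on: "smooth F \<Longrightarrow> continuous_on UNIV F"
  by (simp add: continuous_at_imp_continuous_on differentiable_imp_continuous_within smooth_differentiable)

lemma pderivs_add:
  assumes "smooth F" "smooth G" "vs \<in> lists Basis"
  shows "pderivs vs (\<lambda>x. F x + G x) = (\<lambda>x. pderivs vs F x + pderivs vs G x)"
  using assms(3)
proof (induction vs)
  case Nil
  then show ?case by simp
next
  case (Cons v vs)
  then have "\<And>x. pderivs vs F differentiable (at x)" "\<And>x. pderivs vs G differentiable (at x)"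
    using assms unfolding smooth_def by auto
  with Cons show ?case by (simp del: pderivs.simps add: pderivs_Cons_dir_deriv dir_deriv_add)
qed

lemma pderivs_cmult:
  fixes F :: "real^'n \<Rightarrow> 'b::real_normed_algebra"
  assumes "smooth F" "vs \<in> lists Basis"
  shows "pderivs vs (\<lambda>x. c * F x) = (\<lambda>x. c * pderivs vs F x)"
  using assms(2)
proof (induction vs)
  case Nil
  then show ?case by simp
next
  case (Cons v vs)
  then have "\<And>x. pderivs vs F differentiable (at x)"
    using assms unfolding smooth_def by auto
  with Cons show ?case
    by (simp del: pderivs.simps add: pderivs_Cons_dir_deriv dir_deriv_mult dir_deriv_const)
qed

section \<open>Supports and test functions\<close>

lemma notin_tsupp_eq_0: "x \<notin> tsupp F \<Longrightarrow> F x = 0"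
  unfolding tsupp_def using closure_subset[of "{x. F x \<noteq> 0}"] by blast

lemma tsupp_mult_right: "tsupp (\<lambda>x. F x * (H x :: 'b::mult_zero)) \<subseteq> tsupp H"
  unfolding tsupp_def by (rule closure_mono) auto

lemma closed_tsupp: "closed (tsupp F)"
  unfolding tsupp_def by (rule closed_closure)

lemma compact_tsupp_subset: "compact K \<Longrightarrow> tsupp F \<subseteq> K \<Longrightarrow> compact (tsupp F)"
  using compact_Int_closed[OF _ closed_tsupp, of K F] by (simp only: Int_absorb1)

lemma dir_deriv_notin_tsupp:
  assumes "x \<notin> tsupp H"
  shows "dir_deriv v H x = 0"
proof -
  have "(H has_derivative (\<lambda>h. 0)) (at x)"
  proof (rule has_derivative_transform_within_open[OF has_derivative_const])
    show "open (- tsupp H)"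
      by (rule open_Compl[OF closed_tsupp])
    show "x \<in> - tsupp H"
      using assms by simp
    show "0 = H y" if "y \<in> - tsupp H" for y
      using that notin_tsupp_eq_0[of y H] by simp
  qed
  then show ?thesis by (rule dir_deriv_eq)
qed

lemma tsupp_dir_deriv: "tsupp (dir_deriv v H) \<subseteq> tsupp H"
  unfolding tsupp_def[of "dir_deriv v H"]
proof (rule closure_minimal[OF _ closed_tsupp])
  show "{x. dir_deriv v H x \<noteq> 0} \<subseteq> tsupp H"
    using dir_deriv_notin_tsupp by blast
qed

lemma test_mult:
  fixes F H :: "real^'n \<Rightarrow> complex"
  shows "smooth F \<Longrightarrow> test H \<Longrightarrow> test (\<lambda>x. F x * H x)"
  unfolding test_def using smooth_mult compact_tsupp_subset[OF _ tsupp_mult_right] by blast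

lemma test_dir_deriv: "test H \<Longrightarrow> v \<in> Basis \<Longrightarrow> test (dir_deriv v H)"
  unfolding test_def using smooth_dir_deriv compact_tsupp_subset[OF _ tsupp_dir_deriv] by blast

lemma test_bounded:
  assumes "test H"
  shows "bounded (range H)"
proof (rule bounded_subset)
  have "compact (H ` tsupp H)"
    using assms unfolding test_def
    by (intro compact_continuous_image continuous_on_subset[OF smooth_continuous_on]) auto
  then show "bounded (insert 0 (H ` tsupp H))"
    by (simp only: bounded_insert) (rule compact_imp_bounded)
  show "range H \<subseteq> insert 0 (H ` tsupp H)"
  proof
    fix z assume "z \<in> range H"
    then obtain x where "z = H x" by blast
    then show "z \<in> insert 0 (H ` tsupp H)"
      using notin_tsupp_eq_0[of x H] by (cases "x \<in> tsupp H") auto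
  qed
qed

section \<open>Decay of powers of a small function times a test function\<close>

lemma pderivs_snoc_power_mult:
  fixes g H :: "real^'n \<Rightarrow> 'b::real_normed_field"
  assumes g: "smooth g" and H: "smooth H" and v: "v \<in> Basis" and vs: "vs \<in> lists Basis"
  shows "pderivs (vs @ [v]) (\<lambda>x. g x ^ k * H x) x =
    pderivs vs (\<lambda>x. g x ^ k * dir_deriv v H x) x +
    of_nat k * pderivs vs (\<lambda>x. g x ^ (k - 1) * (dir_deriv v g x * H x)) x"
proof -
  have s1: "smooth (\<lambda>x. g x ^ k * dir_deriv v H x)"
    by (intro smooth_mult smooth_power smooth_dir_deriv g H v)
  have s2: "smooth (\<lambda>x. g x ^ (k - 1) * (dir_deriv v g x * H x))"
    by (intro smooth_mult smooth_power smooth_dir_deriv g H v)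
  have "pderivs (vs @ [v]) (\<lambda>x. g x ^ k * H x) = pderivs vs
      (\<lambda>x. g x ^ k * dir_deriv v H x + of_nat k * (g x ^ (k - 1) * (dir_deriv v g x * H x)))"
    by (simp add: pderivs_snoc dir_deriv_power_mult smooth_differentiable g H)
  also have "\<dots> = (\<lambda>x. pderivs vs (\<lambda>x. g x ^ k * dir_deriv v H x) x +
      pderivs vs (\<lambda>x. of_nat k * (g x ^ (k - 1) * (dir_deriv v g x * H x))) x)"
    by (rule pderivs_add[OF s1 smooth_mult[OF smooth_const s2] vs])
  also have "\<dots> = (\<lambda>x. pderivs vs (\<lambda>x. g x ^ k * dir_deriv v H x) x +
      of_nat k * pderivs vs (\<lambda>x. g x ^ (k - 1) * (dir_deriv v g x * H x)) x)"
    by (simp only: pderivs_cmult[OF s2 vs])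
  finally show ?thesis by simp
qed

lemma derivative_bound_step:
  fixes P Q e :: real
  assumes e: "0 < e" and C1: "0 \<le> C1" and C2: "0 \<le> C2"
    and P: "P \<le> C2 * real (k + 1) ^ m * e ^ k" and Q: "Q \<le> C1 * real (k - 1 + 1) ^ m * e ^ (k - 1)"
  shows "P + real k * Q \<le> (C2 + C1 / e) * real (k + 1) ^ Suc m * e ^ k"
proof -
  have shift: "real k * (real (k - 1 + 1) ^ m * e ^ (k - 1)) \<le> real (k + 1) ^ Suc m * e ^ k / e"
  proof (cases k)
    case 0
    then show ?thesis using e by simp
  next
    case (Suc j)
    then have "real k * (real (k - 1 + 1) ^ m * e ^ (k - 1)) = real k ^ Suc m * e ^ k / e"
      using e by simp
    also have "\<dots> \<le> real (k + 1) ^ Suc m * e ^ k / e"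
      using e by (intro divide_right_mono mult_right_mono power_mono) auto
    finally show ?thesis .
  qed
  have "real k * Q \<le> real k * (C1 * real (k - 1 + 1) ^ m * e ^ (k - 1))"
    by (rule mult_left_mono[OF Q]) simp
  also have "\<dots> = C1 * (real k * (real (k - 1 + 1) ^ m * e ^ (k - 1)))"
    by (simp add: ac_simps)
  also have "\<dots> \<le> C1 * (real (k + 1) ^ Suc m * e ^ k / e)"
    by (rule mult_left_mono[OF shift C1])
  finally have "real k * Q \<le> C1 * (real (k + 1) ^ Suc m * e ^ k / e)" .
  moreover have "P \<le> C2 * real (k + 1) ^ Suc m * e ^ k"
    using P C2 e by (elim order_trans) (intro mult_right_mono mult_left_mono power_increasing, auto)
  ultimately have "P + real k * Q \<le> C2 * real (k + 1) ^ Suc m * e ^ k + C1 * (real (k + 1) ^ Suc m * e ^ k / e)"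
    by simp
  also have "\<dots> = (C2 + C1 / e) * real (k + 1) ^ Suc m * e ^ k"
    using e by (simp add: field_simps)
  finally show ?thesis .
qed

lemma power_mult_test_bound:
  fixes g H :: "real^'n \<Rightarrow> complex"
  assumes H: "test H" "\<forall>x\<in>tsupp H. cmod (g x) \<le> e" and e: "0 \<le> e"
  shows "\<exists>B\<ge>0. \<forall>k x. cmod (g x ^ k * H x) \<le> B * e ^ k"
proof -
  obtain B where B: "\<forall>x. cmod (H x) \<le> B"
    using test_bounded[OF H(1)] by (auto simp: bounded_iff)
  then have B0: "0 \<le> B"
    using norm_ge_zero order_trans by blast
  have "cmod (g x ^ k * H x) \<le> B * e ^ k" for k x
  proof (cases "x \<in> tsupp H")
    case True
    then have "cmod (g x) ^ k \<le> e ^ k"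
      using H(2) by (simp add: power_mono)
    then show ?thesis
      using B by (simp add: norm_mult norm_power mult.commute mult_mono')
  next
    case False
    then show ?thesis
      using B0 e notin_tsupp_eq_0[of x H] by simp
  qed
  with B0 show ?thesis by blast
qed

lemma pderivs_power_mult_bound:
  fixes g H :: "real^'n \<Rightarrow> complex"
  assumes g: "smooth g" and e: "0 < e"
    and H: "test H" "\<forall>x\<in>tsupp H. cmod (g x) \<le> e" and vs: "vs \<in> lists Basis"
  shows "\<exists>C\<ge>0. \<forall>k x. cmod (pderivs vs (\<lambda>x. g x ^ k * H x) x) \<le> C * real (k + 1) ^ length vs * e ^ k"
  using H vs
proof (induction vs arbitrary: H rule: rev_induct)
  case Nil
  then show ?case
    using power_mult_test_bound[of H g e] e by simp
next
  case (snoc v ws)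
  define H1 where "H1 = (\<lambda>x. dir_deriv v g x * H x)"
  define H2 where "H2 = dir_deriv v H"
  have v: "v \<in> Basis" and ws: "ws \<in> lists Basis"
    using snoc.prems(3) by auto
  have sH: "smooth H"
    using snoc.prems(1) by (simp add: test_def)
  have "test H1"
    unfolding H1_def by (intro test_mult smooth_dir_deriv g v snoc.prems(1))
  moreover have "\<forall>x\<in>tsupp H1. cmod (g x) \<le> e"
    using snoc.prems(2) tsupp_mult_right[of "dir_deriv v g" H] unfolding H1_def by blast
  ultimately obtain C1 where C1: "0 \<le> C1"
    "\<And>k x. cmod (pderivs ws (\<lambda>x. g x ^ k * H1 x) x) \<le> C1 * real (k + 1) ^ length ws * e ^ k"
    using snoc.IH ws by blast
  have "test H2"
    unfolding H2_def by (rule test_dir_deriv[OF snoc.prems(1) v])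
  moreover have "\<forall>x\<in>tsupp H2. cmod (g x) \<le> e"
    using snoc.prems(2) tsupp_dir_deriv[of v H] unfolding H2_def by blast
  ultimately obtain C2 where C2: "0 \<le> C2"
    "\<And>k x. cmod (pderivs ws (\<lambda>x. g x ^ k * H2 x) x) \<le> C2 * real (k + 1) ^ length ws * e ^ k"
    using snoc.IH ws by blast
  have "cmod (pderivs (ws @ [v]) (\<lambda>x. g x ^ k * H x) x)
      \<le> (C2 + C1 / e) * real (k + 1) ^ length (ws @ [v]) * e ^ k" for k x
  proof -
    let ?P = "pderivs ws (\<lambda>x. g x ^ k * H2 x) x"
    let ?Q = "pderivs ws (\<lambda>x. g x ^ (k - 1) * H1 x) x"
    have "pderivs (ws @ [v]) (\<lambda>x. g x ^ k * H x) x = ?P + of_nat k * ?Q"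
      by (simp add: pderivs_snoc_power_mult[OF g sH v ws] H1_def H2_def)
    then have "cmod (pderivs (ws @ [v]) (\<lambda>x. g x ^ k * H x) x) \<le> cmod ?P + real k * cmod ?Q"
      using norm_triangle_ineq[of ?P "of_nat k * ?Q"] by (simp add: norm_mult)
    also have "\<dots> \<le> (C2 + C1 / e) * real (k + 1) ^ Suc (length ws) * e ^ k"
      by (rule derivative_bound_step[OF e C1(1) C2(1) C2(2) C1(2)])
    finally show ?thesis by simp
  qed
  moreover have "0 \<le> C2 + C1 / e"
    using C1(1) C2(1) e by simp
  ultimately show ?case by blast
qed

lemma uniform_limit_zero_if_norm_bound:
  fixes F :: "nat \<Rightarrow> 'a \<Rightarrow> 'b::real_normed_vector"
  assumes "\<And>k x. norm (F k x) \<le> b k" and "b \<longlonglongrightarrow> 0"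
  shows "uniform_limit S F (\<lambda>x. 0) sequentially"
  unfolding uniform_limit_iff
proof (intro allI impI)
  fix r :: real assume "0 < r"
  with assms(2) have "\<forall>\<^sub>F k in sequentially. b k < r"
    by (simp add: order_tendstoD(2))
  then show "\<forall>\<^sub>F k in sequentially. \<forall>x\<in>S. dist (F k x) 0 < r"
    by eventually_elim (use assms(1) in \<open>auto intro: le_less_trans\<close>)
qed

lemma conv0_D_power_mult:
  fixes g \<phi> :: "real^'n \<Rightarrow> complex"
  assumes g: "smooth g" and \<phi>: "test \<phi>" and r: "\<forall>x\<in>tsupp \<phi>. cmod (g x) \<le> r" "r < 1"
  shows "conv0_D (\<lambda>k x. g x ^ k * \<phi> x)"
  unfolding conv0_D_def
proof (intro conjI allI ballI)
  show "test (\<lambda>x. g x ^ k * \<phi> x)" for k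
    by (intro test_mult smooth_power g \<phi>)
  show "\<exists>K. compact K \<and> (\<forall>k. tsupp (\<lambda>x. g x ^ k * \<phi> x) \<subseteq> K)"
  proof (intro exI conjI allI)
    show "compact (tsupp \<phi>)"
      using \<phi> by (simp add: test_def)
    show "tsupp (\<lambda>x. g x ^ k * \<phi> x) \<subseteq> tsupp \<phi>" for k
      by (rule tsupp_mult_right)
  qed
  fix vs :: "(real^'n) list" assume vs: "vs \<in> lists Basis"
  define e where "e = max r (1 / 2)"
  have e: "0 < e" "e < 1" and ge: "\<forall>x\<in>tsupp \<phi>. cmod (g x) \<le> e"
    using r by (auto simp: e_def)
  obtain C where C: "\<And>k x. cmod (pderivs vs (\<lambda>x. g x ^ k * \<phi> x) x) \<le> C * real (k + 1) ^ length vs * e ^ k"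
    using pderivs_power_mult_bound[OF g e(1) \<phi> ge vs] by blast
  have "(\<lambda>k. C * real (k + 1) ^ length vs * e ^ k) \<longlonglongrightarrow> 0"
    using e by real_asymp
  with C show "uniform_limit UNIV (\<lambda>k. pderivs vs (\<lambda>x. g x ^ k * \<phi> x)) (\<lambda>x. 0) sequentially"
    by (rule uniform_limit_zero_if_norm_bound)
qed

section \<open>Hyperoperators\<close>

lemma hyperopD:
  fixes A :: "(real^'n \<Rightarrow> complex) \<Rightarrow> 'x::complex_banach \<Rightarrow> 'x"
  assumes "hyperop A"
  shows hyperop_bop: "test \<phi> \<Longrightarrow> bop (A \<phi>)"
    and hyperop_add: "test \<phi> \<Longrightarrow> test \<psi> \<Longrightarrow> A (\<lambda>x. \<phi> x + \<psi> x) = (\<lambda>y. A \<phi> y + A \<psi> y)"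
    and hyperop_scale: "test \<phi> \<Longrightarrow> A (\<lambda>x. c * \<phi> x) = (\<lambda>y. cscale c (A \<phi> y))"
    and hyperop_continuous: "conv0_D \<phi>s \<Longrightarrow> (\<lambda>j. onorm (A (\<phi>s j))) \<longlonglongrightarrow> 0"
    and hyperop_mult: "test \<phi> \<Longrightarrow> test \<psi> \<Longrightarrow> A (\<lambda>x. \<phi> x * \<psi> x) = A \<phi> \<circ> A \<psi>"
    and hyperop_separating: "(\<And>\<phi>. test \<phi> \<Longrightarrow> A \<phi> y = 0) \<Longrightarrow> y = 0"
  using assms unfolding hyperop_def by auto

lemma hyperop_smooth_mult_commute:
  fixes A :: "(real^'n \<Rightarrow> complex) \<Rightarrow> 'x::complex_banach \<Rightarrow> 'x"
  assumes A: "hyperop A" and F: "smooth F" and \<theta>: "test \<theta>" and \<psi>: "test \<psi>"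
  shows "A \<theta> (A (\<lambda>t. F t * \<psi> t) z) = A (\<lambda>t. F t * \<theta> t) (A \<psi> z)"
proof -
  have "A \<theta> (A (\<lambda>t. F t * \<psi> t) z) = A (\<lambda>t. \<theta> t * (F t * \<psi> t)) z"
    using hyperop_mult[OF A \<theta> test_mult[OF F \<psi>]] by simp
  also have "\<dots> = A (\<lambda>t. (F t * \<theta> t) * \<psi> t) z"
    by (simp add: ac_simps)
  also have "\<dots> = A (\<lambda>t. F t * \<theta> t) (A \<psi> z)"
    using hyperop_mult[OF A test_mult[OF F \<theta>] \<psi>] by simp
  finally show ?thesis .
qed

lemma fcalc_apply:
  fixes A :: "(real^'n \<Rightarrow> complex) \<Rightarrow> 'x::complex_banach \<Rightarrow> 'x"
  assumes A: "hyperop A" and f: "smooth f" and \<phi>: "test \<phi>"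
  shows "fcalc f A (A \<phi> y) = A (\<lambda>t. complex_of_real (f t) * \<phi> t) y"
proof -
  define F where "F = (\<lambda>t. complex_of_real (f t))"
  have F: "smooth F"
    unfolding F_def by (rule smooth_of_real[OF f])
  have "\<exists>z \<phi>' y'. test \<phi>' \<and> A \<phi> y = A \<phi>' y' \<and> z = A (\<lambda>t. complex_of_real (f t) * \<phi>' t) y'"
    using \<phi> by blast
  then have "\<exists>\<phi>' y'. test \<phi>' \<and> A \<phi> y = A \<phi>' y' \<and> fcalc f A (A \<phi> y) = A (\<lambda>t. F t * \<phi>' t) y'"
    unfolding fcalc_def F_def by (rule someI_ex)
  then obtain \<phi>' y' where \<phi>': "test \<phi>'" "A \<phi> y = A \<phi>' y'"
    and val: "fcalc f A (A \<phi> y) = A (\<lambda>t. F t * \<phi>' t) y'"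
    by blast
  \<comment> \<open>\<open>fcalc\<close> may pick another representation \<open>A \<phi>' y'\<close> of the same vector; the values agree
    because the operators \<open>A \<theta>\<close> separate points\<close>
  have "A (\<lambda>t. F t * \<phi>' t) y' - A (\<lambda>t. F t * \<phi> t) y = 0"
  proof (rule hyperop_separating[OF A])
    fix \<theta> :: "real^'n \<Rightarrow> complex" assume \<theta>: "test \<theta>"
    then have "linear (A \<theta>)"
      using hyperop_bop[OF A] by (simp add: bop_def bounded_linear.linear)
    then show "A \<theta> (A (\<lambda>t. F t * \<phi>' t) y' - A (\<lambda>t. F t * \<phi> t) y) = 0"
      by (simp add: linear_diff hyperop_smooth_mult_commute[OF A F \<theta>] \<phi>' \<phi>)
  qed
  with val show ?thesis
    by (simp add: F_def)
qed

lemma left_resolvent_hyperop: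
  fixes A :: "(real^'n \<Rightarrow> complex) \<Rightarrow> 'x::complex_banach \<Rightarrow> 'x"
  assumes A: "hyperop A" and f: "smooth f" and b: "\<forall>x\<in>DA A. bbar x = fcalc f A x"
    and S: "\<forall>x. S (bbar x - cscale l x) = x" and h: "test h"
  shows "A h y = S (A (\<lambda>t. (complex_of_real (f t) - l) * h t) y)"
proof -
  let ?g = "\<lambda>t. complex_of_real (f t) - l"
  have "smooth ?g"
    unfolding diff_conv_add_uminus by (intro smooth_add smooth_of_real f smooth_const)
  then have gh: "test (\<lambda>t. ?g t * h t)"
    by (rule test_mult[OF _ h])
  have lh: "test (\<lambda>t. l * h t)"
    by (rule test_mult[OF smooth_const h])
  have "A h y \<in> DA A"
    unfolding DA_def using h by blast
  then have "bbar (A h y) = A (\<lambda>t. complex_of_real (f t) * h t) y"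
    using b fcalc_apply[OF A f h] by simp
  also have "(\<lambda>t. complex_of_real (f t) * h t) = (\<lambda>t. ?g t * h t + l * h t)"
    by (simp add: algebra_simps)
  also have "A \<dots> y = A (\<lambda>t. ?g t * h t) y + cscale l (A h y)"
    by (simp add: hyperop_add[OF A gh lh] hyperop_scale[OF A h])
  finally have "bbar (A h y) - cscale l (A h y) = A (\<lambda>t. ?g t * h t) y"
    by simp
  then show ?thesis
    using S by metis
qed

lemma funpow_unfold_backward:
  assumes "\<And>k. a k = S (a (Suc k))"
  shows "a 0 = (S ^^ k) (a k)"
proof (induction k)
  case 0
  then show ?case by simp
next
  case (Suc k)
  then show ?case
    using assms[of k] by (simp add: funpow_Suc_right del: funpow.simps)
qed

lemma norm_funpow_le:
  fixes S :: "'a::real_normed_vector \<Rightarrow> 'a"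
  assumes S: "\<And>z. norm (S z) \<le> K * norm z" and K: "0 \<le> K"
  shows "norm ((S ^^ k) z) \<le> K ^ k * norm z"
proof (induction k)
  case 0
  then show ?case by simp
next
  case (Suc k)
  have "norm ((S ^^ Suc k) z) \<le> K * norm ((S ^^ k) z)"
    using S by simp
  also have "\<dots> \<le> K * (K ^ k * norm z)"
    using Suc K by (rule mult_left_mono)
  finally show ?case by simp
qed

lemma hyperop_eq_0_if_contraction:
  fixes A :: "(real^'n \<Rightarrow> complex) \<Rightarrow> 'x::complex_banach \<Rightarrow> 'x"
    and S :: "'x \<Rightarrow> 'x" and g :: "real^'n \<Rightarrow> complex"
  assumes A: "hyperop A" and \<phi>: "test \<phi>" and g: "smooth g"
    and S: "\<forall>z. norm (S z) \<le> K * norm z" and K: "0 \<le> K"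
    and small: "\<forall>x\<in>tsupp \<phi>. K * cmod (g x) \<le> r" "r < 1"
    and shift: "\<forall>h y. test h \<longrightarrow> A h y = S (A (\<lambda>t. g t * h t) y)"
  shows "A \<phi> = (\<lambda>y. 0)"
proof
  fix y
  define \<psi> where "\<psi> k = (\<lambda>t. g t ^ k * \<phi> t)" for k
  have \<psi>: "test (\<psi> k)" for k
    unfolding \<psi>_def by (intro test_mult smooth_power g \<phi>)
  have "A (\<psi> k) y = S (A (\<psi> (Suc k)) y)" for k
    using shift \<psi>[of k] by (simp add: \<psi>_def ac_simps)
  then have iterate: "A \<phi> y = (S ^^ k) (A (\<psi> k) y)" for k
    using funpow_unfold_backward[of "\<lambda>k. A (\<psi> k) y" S k] by (simp add: \<psi>_def)
  define \<Phi> where "\<Phi> k = (\<lambda>t. (complex_of_real K * g t) ^ k * \<phi> t)" for k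
  have "conv0_D \<Phi>"
    unfolding \<Phi>_def
    using conv0_D_power_mult[OF smooth_mult[OF smooth_const g] \<phi> _ small(2)] small(1) K
    by (simp add: norm_mult)
  then have lim: "(\<lambda>k. onorm (A (\<Phi> k))) \<longlonglongrightarrow> 0"
    by (rule hyperop_continuous[OF A])
  have \<Phi>: "test (\<Phi> k)" for k
    using \<open>conv0_D \<Phi>\<close> by (simp add: conv0_D_def)
  have bound: "norm (A \<phi> y) \<le> onorm (A (\<Phi> k)) * norm y" for k
  proof -
    have "\<Phi> k = (\<lambda>t. complex_of_real (K ^ k) * \<psi> k t)"
      by (simp add: \<Phi>_def \<psi>_def power_mult_distrib mult.assoc)
    then have "norm (A (\<Phi> k) y) = K ^ k * norm (A (\<psi> k) y)"
      using K by (simp add: hyperop_scale[OF A \<psi>] norm_cscale norm_power)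
    then have "norm (A \<phi> y) \<le> norm (A (\<Phi> k) y)"
      using iterate norm_funpow_le[of S K] S K by metis
    also have "\<dots> \<le> onorm (A (\<Phi> k)) * norm y"
      using hyperop_bop[OF A \<Phi>] by (simp add: bop_def onorm)
    finally show ?thesis .
  qed
  have "(\<lambda>k. onorm (A (\<Phi> k)) * norm y) \<longlonglongrightarrow> 0"
    by (rule tendsto_mult_left_zero[OF lim])
  then have "norm (A \<phi> y) \<le> 0"
    using bound by (intro LIMSEQ_le_const) auto
  then show "A \<phi> y = 0"
    by simp
qed

lemma hsupp_test_near:
  fixes f :: "real^'n \<Rightarrow> 'b::metric_space"
  assumes "t0 \<in> hsupp A" and "continuous_on UNIV f" and "0 < e"
  obtains \<phi> where "test \<phi>" "A \<phi> \<noteq> (\<lambda>y. 0)" "\<forall>x\<in>tsupp \<phi>. dist (f x) (f t0) < e"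
proof -
  have "open (f -` ball (f t0) e)"
    using assms(2) by (intro open_vimage open_ball)
  moreover have "t0 \<in> f -` ball (f t0) e"
    using assms(3) by simp
  ultimately obtain \<phi> where "test \<phi>" "tsupp \<phi> \<subseteq> f -` ball (f t0) e" "A \<phi> \<noteq> (\<lambda>y. 0)"
    using assms(1) unfolding hsupp_def by blast
  then show ?thesis
    by (intro that) (auto simp: dist_commute)
qed

lemma no_bounded_left_resolvent:
  fixes A :: "(real^'n \<Rightarrow> complex) \<Rightarrow> 'x::complex_banach \<Rightarrow> 'x"
  assumes A: "hyperop A" and f: "smooth f" and b: "\<forall>x\<in>DA A. bbar x = fcalc f A x"
    and t0: "t0 \<in> hsupp A" and "bounded_linear S"
  shows "\<not> (\<forall>x. S (bbar x - cscale (complex_of_real (f t0)) x) = x)"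
proof
  let ?l = "complex_of_real (f t0)"
  assume S: "\<forall>x. S (bbar x - cscale ?l x) = x"
  obtain K where K: "0 < K" "\<forall>z. norm (S z) \<le> K * norm z"
    using bounded_linear.pos_bounded[OF \<open>bounded_linear S\<close>] by (metis mult.commute)
  have "0 < 1 / (2 * K)"
    using K(1) by simp
  then obtain \<phi> where \<phi>: "test \<phi>" "A \<phi> \<noteq> (\<lambda>y. 0)"
    and near: "\<forall>x\<in>tsupp \<phi>. dist (f x) (f t0) < 1 / (2 * K)"
    using hsupp_test_near[OF t0 smooth_continuous_on[OF f]] by blast
  have small: "\<forall>x\<in>tsupp \<phi>. K * cmod (complex_of_real (f x) - ?l) \<le> 1 / 2"
  proof
    fix x assume "x \<in> tsupp \<phi>"
    then have "K * dist (f x) (f t0) < K * (1 / (2 * K))"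
      using near K(1) by (intro mult_strict_left_mono) auto
    then show "K * cmod (complex_of_real (f x) - ?l) \<le> 1 / 2"
      using K(1) by (simp add: dist_real_def flip: of_real_diff)
  qed
  have g: "smooth (\<lambda>t. complex_of_real (f t) - ?l)"
    unfolding diff_conv_add_uminus by (intro smooth_add smooth_of_real f smooth_const)
  have shift: "\<forall>h y. test h \<longrightarrow> A h y = S (A (\<lambda>t. (complex_of_real (f t) - ?l) * h t) y)"
    by (intro allI impI) (rule left_resolvent_hyperop[OF A f b S])
  have "A \<phi> = (\<lambda>y. 0)"
    using K(1) by (intro hyperop_eq_0_if_contraction[OF A \<phi>(1) g K(2) _ small _ shift]) auto
  with \<phi>(2) show False ..
qed

theorem lemma5p6:
  fixes A :: "(real^'n \<Rightarrow> complex) \<Rightarrow> 'x::complex_banach \<Rightarrow> 'x"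
    and f :: "real^'n \<Rightarrow> real"
    and bbar :: "'x \<Rightarrow> 'x"
  assumes "hyperop A"
    and "smooth f"
    and "bop bbar"
    and "\<forall>x \<in> DA A. bbar x = fcalc f A x"
  shows "(\<lambda>t. complex_of_real (f t)) ` hsupp A \<subseteq> opspectrum bbar"
proof
  fix l assume "l \<in> (\<lambda>t. complex_of_real (f t)) ` hsupp A"
  then obtain t0 where t0: "t0 \<in> hsupp A" and l: "l = complex_of_real (f t0)"
    by blast
  show "l \<in> opspectrum bbar"
    using no_bounded_left_resolvent[OF assms(1,2,4) t0] unfolding opspectrum_def bop_def l by blast
qed

end
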